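(* Let $u$ be a smooth absolute $E_1$-minimizer on a domain of the $xy$-plane where $D\neq0$. Then $$\alpha\Big(N+\tfrac13\alpha^{-1}HN^{\perp}\Big)\theta+N^{\perp}(\alpha)=-\alpha^2 .$$
   Context: Heisenberg group $H_1$ with contact form $\Theta=dt+x\,dy-y\,dx$; graph $t=u(x,y)$, $D=[(u_x-y)^2+(u_y+x)^2]^{1/2}$, $\cos\theta=(u_x-y)/D$, $\sin\theta=(u_y+x)/D$, $\alpha=-1/D$, $H=D^{-3}\{(u_y+x)^2u_{xx}-2(u_y+x)(u_x-y)u_{xy}+(u_x-y)^2u_{yy}\}$ (the $p$-mean curvature), $N^{\perp}=\sin\theta\,\partial_x-\cos\theta\,\partial_y$, $N=\cos\theta\,\partial_x+\sin\theta\,\partial_y$. Absolute $E_1$-minimizer: $-N^{\perp}\alpha+\frac12\alpha^2+\frac16H^2=0$ on the nonsingular domain (this is $e_1\alpha+\frac12\alpha^2+\frac16H^2=0$, $e_1$ acting as $-N^\perp$). *)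

theory Defs
  imports "HOL-Analysis.Analysis"
begin

definition px :: "(real \<times> real \<Rightarrow> real) \<Rightarrow> real \<times> real \<Rightarrow> real" where
  "px f = (\<lambda>(x, y). deriv (\<lambda>s. f (s, y)) x)"

definition py :: "(real \<times> real \<Rightarrow> real) \<Rightarrow> real \<times> real \<Rightarrow> real" where
  "py f = (\<lambda>(x, y). deriv (\<lambda>t. f (x, t)) y)"

fun Ck :: "nat \<Rightarrow> (real \<times> real \<Rightarrow> real) \<Rightarrow> (real \<times> real) set \<Rightarrow> bool" where
  "Ck 0 f U = continuous_on U f"
| "Ck (Suc k) f U =
     (continuous_on U f \<and> f differentiable_on U \<and> Ck k (px f) U \<and> Ck k (py f) U)"

definition smooth_on_plane :: "(real \<times> real \<Rightarrow> real) \<Rightarrow> (real \<times> real) set \<Rightarrow> bool" where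
  "smooth_on_plane f U = (\<forall>k. Ck k f U)"

text \<open>Quantities attached to the graph t = u(x,y) in the Heisenberg group H_1.\<close>

definition Dfun :: "(real \<times> real \<Rightarrow> real) \<Rightarrow> real \<times> real \<Rightarrow> real" where
  "Dfun u = (\<lambda>(x, y). sqrt ((px u (x, y) - y)\<^sup>2 + (py u (x, y) + x)\<^sup>2))"

definition costh :: "(real \<times> real \<Rightarrow> real) \<Rightarrow> real \<times> real \<Rightarrow> real" where
  "costh u = (\<lambda>(x, y). (px u (x, y) - y) / Dfun u (x, y))"

definition sinth :: "(real \<times> real \<Rightarrow> real) \<Rightarrow> real \<times> real \<Rightarrow> real" where
  "sinth u = (\<lambda>(x, y). (py u (x, y) + x) / Dfun u (x, y))"

definition alphafun :: "(real \<times> real \<Rightarrow> real) \<Rightarrow> real \<times> real \<Rightarrow> real" where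
  "alphafun u = (\<lambda>p. - 1 / Dfun u p)"

text \<open>p-mean curvature; u_xy is taken as px (py u).\<close>
definition Hfun :: "(real \<times> real \<Rightarrow> real) \<Rightarrow> real \<times> real \<Rightarrow> real" where
  "Hfun u = (\<lambda>(x, y). (1 / (Dfun u (x, y)) ^ 3) *
     ((py u (x, y) + x)\<^sup>2 * px (px u) (x, y)
      - 2 * (py u (x, y) + x) * (px u (x, y) - y) * px (py u) (x, y)
      + (px u (x, y) - y)\<^sup>2 * py (py u) (x, y)))"

definition Nop :: "(real \<times> real \<Rightarrow> real) \<Rightarrow> (real \<times> real \<Rightarrow> real) \<Rightarrow> real \<times> real \<Rightarrow> real" where
  "Nop u f = (\<lambda>p. costh u p * px f p + sinth u p * py f p)"

definition Nperp :: "(real \<times> real \<Rightarrow> real) \<Rightarrow> (real \<times> real \<Rightarrow> real) \<Rightarrow> real \<times> real \<Rightarrow> real" where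
  "Nperp u f = (\<lambda>p. sinth u p * px f p - costh u p * py f p)"

definition abs_E1_minimizer :: "(real \<times> real \<Rightarrow> real) \<Rightarrow> (real \<times> real) set \<Rightarrow> bool" where
  "abs_E1_minimizer u \<Omega> =
     (\<forall>p\<in>\<Omega>. - Nperp u (alphafun u) p + (1/2) * (alphafun u p)\<^sup>2 + (1/6) * (Hfun u p)\<^sup>2 = 0)"

end

theory Submission
  imports Defs
begin

text \<open>Write \<open>a = u\<^sub>x - y\<close>, \<open>b = u\<^sub>y + x\<close> and \<open>R = D = \<surd>(a\<^sup>2 + b\<^sup>2)\<close>, so that
  \<open>\<theta>\<close> is a polar angle of \<open>(a, b)\<close> and \<open>\<alpha> = -1/R\<close>. Differentiating
  \<open>a sin \<theta> = b cos \<theta>\<close> gives \<open>d\<theta> = (a db - b da)/R\<^sup>2\<close>, while \<open>d\<alpha> = (a da + b db)/R\<^sup>3\<close>.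
  With the symmetry of mixed partials this yields two identities: \<open>N\<^sup>\<perp>\<theta> = -H\<close>, and
  \<open>\<alpha> N\<theta> = N\<^sup>\<perp>\<alpha> - 2\<alpha>\<^sup>2\<close>, where the two sides differ only through the contact twist
  \<open>b\<^sub>x - a\<^sub>y = 2\<close>, which contributes \<open>2/R\<^sup>2 = 2\<alpha>\<^sup>2\<close>. Substituting both into the left-hand
  side and eliminating \<open>N\<^sup>\<perp>\<alpha> = \<alpha>\<^sup>2/2 + H\<^sup>2/6\<close> by the minimizer equation leaves \<open>-\<alpha>\<^sup>2\<close>.\<close>

lemma has_derivative_imp_partial_x:
  assumes "(f has_derivative f') (at (x, y))"
  shows "((\<lambda>s. f (s, y)) has_real_derivative f' (1, 0)) (at x)"
proof -
  have "((\<lambda>s. (s, y)) has_derivative (\<lambda>h. (h, 0))) (at x)"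
    by (auto intro!: derivative_eq_intros)
  from has_derivative_compose[OF this assms]
  have "((\<lambda>s. f (s, y)) has_derivative (\<lambda>h. f' (h, 0))) (at x)" by simp
  moreover have "(\<lambda>h. f' (h, 0)) = (*) (f' (1, 0))"
  proof
    fix h :: real
    have "f' (h, 0) = f' (h *\<^sub>R (1, 0))"
      by simp
    also have "\<dots> = h * f' (1, 0)"
      by (rule linear_scale[OF has_derivative_linear[OF assms], unfolded real_scaleR_def])
    finally show "f' (h, 0) = f' (1, 0) * h"
      by (simp only: mult.commute)
  qed
  ultimately show ?thesis
    by (simp only: has_field_derivative_def)
qed

lemma has_derivative_imp_partial_y:
  assumes "(f has_derivative f') (at (x, y))"
  shows "((\<lambda>t. f (x, t)) has_real_derivative f' (0, 1)) (at y)"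
proof -
  have "((\<lambda>t. (x, t)) has_derivative (\<lambda>h. (0, h))) (at y)"
    by (auto intro!: derivative_eq_intros)
  from has_derivative_compose[OF this assms]
  have "((\<lambda>t. f (x, t)) has_derivative (\<lambda>h. f' (0, h))) (at y)" by simp
  moreover have "(\<lambda>h. f' (0, h)) = (*) (f' (0, 1))"
  proof
    fix h :: real
    have "f' (0, h) = f' (h *\<^sub>R (0, 1))"
      by simp
    also have "\<dots> = h * f' (0, 1)"
      by (rule linear_scale[OF has_derivative_linear[OF assms], unfolded real_scaleR_def])
    finally show "f' (0, h) = f' (0, 1) * h"
      by (simp only: mult.commute)
  qed
  ultimately show ?thesis
    by (simp only: has_field_derivative_def)
qed

lemma px_eq_derivative:
  "(f has_derivative f') (at (x, y)) \<Longrightarrow> px f (x, y) = f' (1, 0)"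
  by (simp add: px_def DERIV_imp_deriv has_derivative_imp_partial_x)

lemma py_eq_derivative:
  "(f has_derivative f') (at (x, y)) \<Longrightarrow> py f (x, y) = f' (0, 1)"
  by (simp add: py_def DERIV_imp_deriv has_derivative_imp_partial_y)

lemma px_has_real_derivative:
  "f differentiable (at (x, y)) \<Longrightarrow> ((\<lambda>s. f (s, y)) has_real_derivative px f (x, y)) (at x)"
  unfolding differentiable_def using has_derivative_imp_partial_x px_eq_derivative by metis

lemma py_has_real_derivative:
  "f differentiable (at (x, y)) \<Longrightarrow> ((\<lambda>t. f (x, t)) has_real_derivative py f (x, y)) (at y)"
  by (metis differentiable_def has_derivative_imp_partial_y py_eq_derivative)

lemma px_comp_swap: "px (f \<circ> prod.swap) = py f \<circ> prod.swap"
  by (simp add: px_def py_def fun_eq_iff)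

lemma py_comp_swap: "py (f \<circ> prod.swap) = px f \<circ> prod.swap"
  by (simp add: px_def py_def fun_eq_iff)

lemma second_difference_mean_value_py_px:
  fixes f :: "real \<times> real \<Rightarrow> real"
  assumes "h > 0"
    and fx: "\<And>s t. x \<le> s \<Longrightarrow> s \<le> x + h \<Longrightarrow> y \<le> t \<Longrightarrow> t \<le> y + h \<Longrightarrow>
               ((\<lambda>r. f (r, t)) has_real_derivative px f (s, t)) (at s)"
    and fxy: "\<And>s t. x \<le> s \<Longrightarrow> s \<le> x + h \<Longrightarrow> y \<le> t \<Longrightarrow> t \<le> y + h \<Longrightarrow>
               ((\<lambda>r. px f (s, r)) has_real_derivative py (px f) (s, t)) (at t)"
  obtains \<xi> \<eta> where "x < \<xi>" "\<xi> < x + h" "y < \<eta>" "\<eta> < y + h"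
    and "f (x + h, y + h) - f (x + h, y) - f (x, y + h) + f (x, y) = h\<^sup>2 * py (px f) (\<xi>, \<eta>)"
proof -
  have "\<exists>\<xi>. x < \<xi> \<and> \<xi> < x + h \<and>
      (f (x + h, y + h) - f (x + h, y)) - (f (x, y + h) - f (x, y))
        = (x + h - x) * (px f (\<xi>, y + h) - px f (\<xi>, y))"
    by (rule MVT2[where f="\<lambda>s. f (s, y + h) - f (s, y)"])
       (use \<open>h > 0\<close> in \<open>auto intro!: DERIV_diff fx\<close>)
  then obtain \<xi> where \<xi>: "x < \<xi>" "\<xi> < x + h"
    and "f (x + h, y + h) - f (x + h, y) - f (x, y + h) + f (x, y)
           = h * (px f (\<xi>, y + h) - px f (\<xi>, y))"
    by (auto simp: algebra_simps)
  moreover have "\<exists>\<eta>. y < \<eta> \<and> \<eta> < y + h \<and>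
      px f (\<xi>, y + h) - px f (\<xi>, y) = (y + h - y) * py (px f) (\<xi>, \<eta>)"
    by (rule MVT2[where f="\<lambda>t. px f (\<xi>, t)"]) (use \<open>h > 0\<close> \<xi> in \<open>auto intro!: fxy\<close>)
  ultimately show ?thesis
    using that by (auto simp: power2_eq_square)
qed

lemma second_difference_mean_value_px_py:
  fixes f :: "real \<times> real \<Rightarrow> real"
  assumes "h > 0"
    and fy: "\<And>s t. x \<le> s \<Longrightarrow> s \<le> x + h \<Longrightarrow> y \<le> t \<Longrightarrow> t \<le> y + h \<Longrightarrow>
               ((\<lambda>r. f (s, r)) has_real_derivative py f (s, t)) (at t)"
    and fyx: "\<And>s t. x \<le> s \<Longrightarrow> s \<le> x + h \<Longrightarrow> y \<le> t \<Longrightarrow> t \<le> y + h \<Longrightarrow>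
               ((\<lambda>r. py f (r, t)) has_real_derivative px (py f) (s, t)) (at s)"
  obtains \<xi> \<eta> where "x < \<xi>" "\<xi> < x + h" "y < \<eta>" "\<eta> < y + h"
    and "f (x + h, y + h) - f (x + h, y) - f (x, y + h) + f (x, y) = h\<^sup>2 * px (py f) (\<xi>, \<eta>)"
proof -
  obtain \<eta> \<xi> where "y < \<eta>" "\<eta> < y + h" "x < \<xi>" "\<xi> < x + h"
    and "(f \<circ> prod.swap) (y + h, x + h) - (f \<circ> prod.swap) (y + h, x)
           - (f \<circ> prod.swap) (y, x + h) + (f \<circ> prod.swap) (y, x)
         = h\<^sup>2 * py (px (f \<circ> prod.swap)) (\<eta>, \<xi>)"
    by (rule second_difference_mean_value_py_px[of h y x "f \<circ> prod.swap"])
       (use assms in \<open>simp_all add: px_comp_swap py_comp_swap\<close>)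
  then show ?thesis
    using that by (simp add: px_comp_swap py_comp_swap)
qed

lemma dist_small_square:
  fixes s t x y h :: real
  assumes "x \<le> s" "s \<le> x + h" "y \<le> t" "t \<le> y + h"
  shows "dist (s, t) (x, y) \<le> 2 * h"
  using sqrt_sum_squares_le_sum_abs[of "s - x" "t - y"] assms
  by (simp add: dist_Pair_Pair dist_real_def)

lemma mixed_partials_meet_in_square:
  fixes f :: "real \<times> real \<Rightarrow> real"
  assumes "h > 0"
    and diff: "\<And>s t. x \<le> s \<Longrightarrow> s \<le> x + h \<Longrightarrow> y \<le> t \<Longrightarrow> t \<le> y + h \<Longrightarrow>
                 f differentiable (at (s, t)) \<and> px f differentiable (at (s, t)) \<and> py f differentiable (at (s, t))"
  obtains \<xi> \<eta> \<xi>' \<eta>' where "dist (\<xi>, \<eta>) (x, y) \<le> 2 * h" "dist (\<xi>', \<eta>') (x, y) \<le> 2 * h"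
    and "py (px f) (\<xi>, \<eta>) = px (py f) (\<xi>', \<eta>')"
proof -
  obtain \<xi> \<eta> where "x < \<xi>" "\<xi> < x + h" "y < \<eta>" "\<eta> < y + h"
    and \<Delta>: "f (x + h, y + h) - f (x + h, y) - f (x, y + h) + f (x, y) = h\<^sup>2 * py (px f) (\<xi>, \<eta>)"
    by (rule second_difference_mean_value_py_px[where f = f and x = x and y = y, OF \<open>h > 0\<close>])
       (simp_all add: diff px_has_real_derivative py_has_real_derivative)
  moreover obtain \<xi>' \<eta>' where "x < \<xi>'" "\<xi>' < x + h" "y < \<eta>'" "\<eta>' < y + h"
    and \<Delta>': "f (x + h, y + h) - f (x + h, y) - f (x, y + h) + f (x, y) = h\<^sup>2 * px (py f) (\<xi>', \<eta>')"
    by (rule second_difference_mean_value_px_py[where f = f and x = x and y = y, OF \<open>h > 0\<close>])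
       (simp_all add: diff px_has_real_derivative py_has_real_derivative)
  moreover have "py (px f) (\<xi>, \<eta>) = px (py f) (\<xi>', \<eta>')"
    using \<Delta> \<Delta>' \<open>h > 0\<close> by simp
  ultimately show ?thesis
    by (intro that[of \<xi> \<eta> \<xi>' \<eta>']) (auto intro!: dist_small_square)
qed

lemma mixed_partials_eq:
  fixes f :: "real \<times> real \<Rightarrow> real"
  assumes U: "open U" "(x, y) \<in> U"
    and diff: "f differentiable_on U" "px f differentiable_on U" "py f differentiable_on U"
    and cont: "isCont (px (py f)) (x, y)" "isCont (py (px f)) (x, y)"
  shows "px (py f) (x, y) = py (px f) (x, y)"
proof -
  have "\<bar>px (py f) (x, y) - py (px f) (x, y)\<bar> < e" if "e > 0" for e
  proof -
    obtain r where "r > 0" and r: "ball (x, y) r \<subseteq> U"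
      using U openE by blast
    obtain d1 where "d1 > 0"
      and d1: "\<And>q. dist q (x, y) < d1 \<Longrightarrow> \<bar>px (py f) q - px (py f) (x, y)\<bar> < e / 2"
      using cont(1) \<open>e > 0\<close> unfolding continuous_at_eps_delta dist_real_def
      by (meson half_gt_zero)
    obtain d2 where "d2 > 0"
      and d2: "\<And>q. dist q (x, y) < d2 \<Longrightarrow> \<bar>py (px f) q - py (px f) (x, y)\<bar> < e / 2"
      using cont(2) \<open>e > 0\<close> unfolding continuous_at_eps_delta dist_real_def
      by (meson half_gt_zero)
    define h where "h = min r (min d1 d2) / 3"
    have "h > 0" and h: "2 * h < r" "2 * h < d1" "2 * h < d2"
      using \<open>r > 0\<close> \<open>d1 > 0\<close> \<open>d2 > 0\<close> by (auto simp: h_def min_def)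
    have "f differentiable (at (s, t)) \<and> px f differentiable (at (s, t)) \<and> py f differentiable (at (s, t))"
      if "x \<le> s" "s \<le> x + h" "y \<le> t" "t \<le> y + h" for s t
    proof -
      have "(s, t) \<in> U"
        using r dist_small_square[OF that] h by (auto simp: dist_commute)
      then show ?thesis
        using diff by (simp add: differentiable_on_eq_differentiable_at[OF U(1)])
    qed
    then obtain \<xi> \<eta> \<xi>' \<eta>' where "dist (\<xi>, \<eta>) (x, y) \<le> 2 * h" "dist (\<xi>', \<eta>') (x, y) \<le> 2 * h"
      and "py (px f) (\<xi>, \<eta>) = px (py f) (\<xi>', \<eta>')"
      by (rule mixed_partials_meet_in_square[where f = f and x = x and y = y, OF \<open>h > 0\<close>])
    then show ?thesis
      using d1[of "(\<xi>', \<eta>')"] d2[of "(\<xi>, \<eta>)"] h by linarith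
  qed
  then show ?thesis
    by (metis less_irrefl zero_less_abs_iff eq_iff_diff_eq_0)
qed

lemma polar_angle_derivative:
  fixes a b \<theta> :: "'a::real_normed_vector \<Rightarrow> real"
  assumes a: "(a has_derivative a') (at x)" and b: "(b has_derivative b') (at x)"
    and \<theta>: "(\<theta> has_derivative \<theta>') (at x)"
    and S: "open S" "x \<in> S"
    and angle: "\<forall>y\<in>S. cos (\<theta> y) = a y / sqrt ((a y)\<^sup>2 + (b y)\<^sup>2) \<and> sin (\<theta> y) = b y / sqrt ((a y)\<^sup>2 + (b y)\<^sup>2)"
    and nonzero: "(a x)\<^sup>2 + (b x)\<^sup>2 \<noteq> 0"
  shows "\<theta>' h = (a x * b' h - b x * a' h) / ((a x)\<^sup>2 + (b x)\<^sup>2)"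
proof -
  define g where "g y = a y * sin (\<theta> y) - b y * cos (\<theta> y)" for y
  have "(g has_derivative (\<lambda>h. (a x * (\<theta>' h * cos (\<theta> x)) + a' h * sin (\<theta> x))
                            - (b x * (\<theta>' h * - sin (\<theta> x)) + b' h * cos (\<theta> x)))) (at x)"
    unfolding g_def
    by (intro has_derivative_diff has_derivative_mult has_derivative_sin has_derivative_cos a b \<theta>)
  moreover have "(g has_derivative (\<lambda>h. 0)) (at x)"
  proof (rule has_derivative_transform_within_open[OF has_derivative_const S])
    show "0 = g y" if "y \<in> S" for y
      using angle that by (simp add: g_def field_simps)
  qed
  ultimately have "(\<lambda>h. (a x * (\<theta>' h * cos (\<theta> x)) + a' h * sin (\<theta> x))
                     - (b x * (\<theta>' h * - sin (\<theta> x)) + b' h * cos (\<theta> x))) = (\<lambda>h. 0)"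
    by (rule has_derivative_unique)
  from fun_cong[OF this, of h]
  have derivative_zero: "(a x * (\<theta>' h * cos (\<theta> x)) + a' h * sin (\<theta> x))
          - (b x * (\<theta>' h * - sin (\<theta> x)) + b' h * cos (\<theta> x)) = 0"
    by simp
  define R where "R = sqrt ((a x)\<^sup>2 + (b x)\<^sup>2)"
  have "R > 0"
    using nonzero by (simp add: R_def add_nonneg_nonneg order_le_neq_trans)
  then have polar: "R * cos (\<theta> x) = a x" "R * sin (\<theta> x) = b x"
    using angle S by (auto simp: R_def)
  have "0 = R * ((a x * (\<theta>' h * cos (\<theta> x)) + a' h * sin (\<theta> x))
                  - (b x * (\<theta>' h * - sin (\<theta> x)) + b' h * cos (\<theta> x)))"
    by (simp only: derivative_zero mult_zero_right)
  also have "\<dots> = \<theta>' h * (a x * (R * cos (\<theta> x)) + b x * (R * sin (\<theta> x)))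
                   + a' h * (R * sin (\<theta> x)) - b' h * (R * cos (\<theta> x))"
    by (simp add: algebra_simps)
  also have "\<dots> = \<theta>' h * ((a x)\<^sup>2 + (b x)\<^sup>2) - (a x * b' h - b x * a' h)"
    by (simp add: polar power2_eq_square algebra_simps)
  finally show ?thesis
    using nonzero by (simp add: field_simps)
qed

lemma has_derivative_minus_inverse_sqrt_sum_squares:
  fixes a b :: "'a::real_normed_vector \<Rightarrow> real"
  assumes "(a has_derivative a') (at x)" and "(b has_derivative b') (at x)"
    and "(a x)\<^sup>2 + (b x)\<^sup>2 \<noteq> 0"
  shows "((\<lambda>y. - 1 / sqrt ((a y)\<^sup>2 + (b y)\<^sup>2)) has_derivative
           (\<lambda>h. (a x * a' h + b x * b' h) / sqrt ((a x)\<^sup>2 + (b x)\<^sup>2) ^ 3)) (at x)"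
proof -
  define q where "q = (a x)\<^sup>2 + (b x)\<^sup>2"
  have "q > 0"
    using assms(3) by (simp add: q_def add_nonneg_nonneg order_le_neq_trans)
  have "DERIV (\<lambda>t. - 1 / sqrt t) q :> (0 * sqrt q - (- 1) * (inverse (sqrt q) / 2)) / (sqrt q * sqrt q)"
    using \<open>q > 0\<close> by (intro DERIV_divide DERIV_const DERIV_real_sqrt) simp_all
  moreover have "(0 * sqrt q - (- 1) * (inverse (sqrt q) / 2)) / (sqrt q * sqrt q) = 1 / (2 * sqrt q ^ 3)"
    using \<open>q > 0\<close> by (simp add: field_simps power3_eq_cube)
  ultimately have outer: "DERIV (\<lambda>t. - 1 / sqrt t) q :> 1 / (2 * sqrt q ^ 3)"
    by simp
  have inner: "((\<lambda>y. (a y)\<^sup>2 + (b y)\<^sup>2) has_derivative (\<lambda>h. 2 * a' h * a x + 2 * b' h * b x)) (at x)"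
    using has_derivative_add[OF has_derivative_power[OF assms(1)] has_derivative_power[OF assms(2)], of 2 2]
    by simp
  from DERIV_compose_FDERIV[OF outer[unfolded q_def] inner]
  show ?thesis
    by (rule has_derivative_eq_rhs) (use \<open>q > 0\<close> in \<open>simp add: fun_eq_iff q_def[symmetric] field_simps\<close>)
qed

lemma frame_partials:
  fixes u \<theta> :: "real \<times> real \<Rightarrow> real"
  assumes ux: "px u differentiable (at (x, y))" and uy: "py u differentiable (at (x, y))"
    and \<theta>: "\<theta> differentiable (at (x, y))"
    and U: "open U" "(x, y) \<in> U"
    and angle: "\<forall>q\<in>U. cos (\<theta> q) = costh u q \<and> sin (\<theta> q) = sinth u q"
    and D: "Dfun u (x, y) \<noteq> 0"
  defines "a \<equiv> px u (x, y) - y" and "b \<equiv> py u (x, y) + x"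
  shows "px \<theta> (x, y) = (a * (px (py u) (x, y) + 1) - b * px (px u) (x, y)) / (a\<^sup>2 + b\<^sup>2)"
    and "py \<theta> (x, y) = (a * py (py u) (x, y) - b * (py (px u) (x, y) - 1)) / (a\<^sup>2 + b\<^sup>2)"
    and "px (alphafun u) (x, y) = (a * px (px u) (x, y) + b * (px (py u) (x, y) + 1)) / Dfun u (x, y) ^ 3"
    and "py (alphafun u) (x, y) = (a * (py (px u) (x, y) - 1) + b * py (py u) (x, y)) / Dfun u (x, y) ^ 3"
proof -
  obtain Ux Uy \<Theta> where Ux: "(px u has_derivative Ux) (at (x, y))"
    and Uy: "(py u has_derivative Uy) (at (x, y))" and \<Theta>: "(\<theta> has_derivative \<Theta>) (at (x, y))"
    using ux uy \<theta> by (meson differentiable_def)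
  define A where "A q = px u q - snd q" for q
  define B where "B q = py u q + fst q" for q
  have dA: "(A has_derivative (\<lambda>h. Ux h - snd h)) (at (x, y))"
    unfolding A_def by (intro has_derivative_diff Ux has_derivative_snd has_derivative_ident)
  have dB: "(B has_derivative (\<lambda>h. Uy h + fst h)) (at (x, y))"
    unfolding B_def by (intro has_derivative_add Uy has_derivative_fst has_derivative_ident)
  have AB: "A (x, y) = a" "B (x, y) = b"
    by (simp_all add: A_def B_def a_def b_def)
  have Dfun_eq: "Dfun u = (\<lambda>q. sqrt ((A q)\<^sup>2 + (B q)\<^sup>2))"
    by (auto simp: fun_eq_iff Dfun_def A_def B_def)
  have nonzero: "(A (x, y))\<^sup>2 + (B (x, y))\<^sup>2 \<noteq> 0"
    using D by (simp add: Dfun_eq)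
  have "\<forall>q\<in>U. cos (\<theta> q) = A q / sqrt ((A q)\<^sup>2 + (B q)\<^sup>2) \<and> sin (\<theta> q) = B q / sqrt ((A q)\<^sup>2 + (B q)\<^sup>2)"
    using angle by (auto simp: costh_def sinth_def Dfun_def A_def B_def)
  from polar_angle_derivative[OF dA dB \<Theta> U this nonzero]
  have \<Theta>_eq: "\<Theta> h = (a * (Uy h + fst h) - b * (Ux h - snd h)) / (a\<^sup>2 + b\<^sup>2)" for h
    by (simp add: AB)
  have "alphafun u = (\<lambda>q. - 1 / sqrt ((A q)\<^sup>2 + (B q)\<^sup>2))"
    by (simp add: alphafun_def Dfun_eq)
  with has_derivative_minus_inverse_sqrt_sum_squares[OF dA dB nonzero]
  have "(alphafun u has_derivative (\<lambda>h. (a * (Ux h - snd h) + b * (Uy h + fst h)) / Dfun u (x, y) ^ 3)) (at (x, y))"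
    by (simp add: AB Dfun_eq)
  note derivatives = \<Theta> this Ux Uy
  show "px \<theta> (x, y) = (a * (px (py u) (x, y) + 1) - b * px (px u) (x, y)) / (a\<^sup>2 + b\<^sup>2)"
    and "py \<theta> (x, y) = (a * py (py u) (x, y) - b * (py (px u) (x, y) - 1)) / (a\<^sup>2 + b\<^sup>2)"
    and "px (alphafun u) (x, y) = (a * px (px u) (x, y) + b * (px (py u) (x, y) + 1)) / Dfun u (x, y) ^ 3"
    and "py (alphafun u) (x, y) = (a * (py (px u) (x, y) - 1) + b * py (py u) (x, y)) / Dfun u (x, y) ^ 3"
    by (simp_all add: derivatives[THEN px_eq_derivative] derivatives[THEN py_eq_derivative] \<Theta>_eq)
qed

lemma frame_in_coordinates:
  fixes u \<theta> :: "real \<times> real \<Rightarrow> real"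
  assumes "px u differentiable (at (x, y))" "py u differentiable (at (x, y))"
    and "\<theta> differentiable (at (x, y))"
    and "open U" "(x, y) \<in> U"
    and "\<forall>q\<in>U. cos (\<theta> q) = costh u q \<and> sin (\<theta> q) = sinth u q"
    and "Dfun u (x, y) \<noteq> 0"
    and "px (py u) (x, y) = py (px u) (x, y)"
  obtains a b A P B R :: real
  where "R > 0" "R\<^sup>2 = a\<^sup>2 + b\<^sup>2"
    and "costh u (x, y) = a / R" "sinth u (x, y) = b / R" "alphafun u (x, y) = - 1 / R"
    and "Hfun u (x, y) = (b\<^sup>2 * A - 2 * b * a * P + a\<^sup>2 * B) / R ^ 3"
    and "px \<theta> (x, y) = (a * (P + 1) - b * A) / R\<^sup>2" "py \<theta> (x, y) = (a * B - b * (P - 1)) / R\<^sup>2"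
    and "px (alphafun u) (x, y) = (a * A + b * (P + 1)) / R ^ 3"
    and "py (alphafun u) (x, y) = (a * (P - 1) + b * B) / R ^ 3"
proof
  let ?a = "px u (x, y) - y" and ?b = "py u (x, y) + x"
  show "Dfun u (x, y) > 0" "(Dfun u (x, y))\<^sup>2 = ?a\<^sup>2 + ?b\<^sup>2"
    using assms(7) by (simp_all add: Dfun_def sum_power2_gt_zero_iff)
  note partials = frame_partials[OF assms(1-7)]
  then show "px \<theta> (x, y) = (?a * (px (py u) (x, y) + 1) - ?b * px (px u) (x, y)) / (Dfun u (x, y))\<^sup>2"
    and "py \<theta> (x, y) = (?a * py (py u) (x, y) - ?b * (px (py u) (x, y) - 1)) / (Dfun u (x, y))\<^sup>2"
    using \<open>(Dfun u (x, y))\<^sup>2 = ?a\<^sup>2 + ?b\<^sup>2\<close> assms(8) by simp_all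
  show "px (alphafun u) (x, y) = (?a * px (px u) (x, y) + ?b * (px (py u) (x, y) + 1)) / Dfun u (x, y) ^ 3"
    and "py (alphafun u) (x, y) = (?a * (px (py u) (x, y) - 1) + ?b * py (py u) (x, y)) / Dfun u (x, y) ^ 3"
    using partials assms(8) by simp_all
qed (simp_all add: costh_def sinth_def alphafun_def Hfun_def)

lemma Nperp_theta_eq:
  fixes u \<theta> :: "real \<times> real \<Rightarrow> real"
  assumes "px u differentiable (at (x, y))" "py u differentiable (at (x, y))"
    and "\<theta> differentiable (at (x, y))"
    and "open U" "(x, y) \<in> U"
    and "\<forall>q\<in>U. cos (\<theta> q) = costh u q \<and> sin (\<theta> q) = sinth u q"
    and "Dfun u (x, y) \<noteq> 0"
    and "px (py u) (x, y) = py (px u) (x, y)"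
  shows "Nperp u \<theta> (x, y) = - Hfun u (x, y)"
proof -
  obtain a b A P B R :: real
  where "R > 0"
    and frame: "costh u (x, y) = a / R" "sinth u (x, y) = b / R"
      "Hfun u (x, y) = (b\<^sup>2 * A - 2 * b * a * P + a\<^sup>2 * B) / R ^ 3"
      "px \<theta> (x, y) = (a * (P + 1) - b * A) / R\<^sup>2" "py \<theta> (x, y) = (a * B - b * (P - 1)) / R\<^sup>2"
    by (rule frame_in_coordinates[OF assms])
  then show ?thesis
    unfolding Nperp_def frame by (simp add: field_simps power2_eq_square power3_eq_cube)
qed

lemma alpha_Nop_theta_eq:
  fixes u \<theta> :: "real \<times> real \<Rightarrow> real"
  assumes "px u differentiable (at (x, y))" "py u differentiable (at (x, y))"
    and "\<theta> differentiable (at (x, y))"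
    and "open U" "(x, y) \<in> U"
    and "\<forall>q\<in>U. cos (\<theta> q) = costh u q \<and> sin (\<theta> q) = sinth u q"
    and "Dfun u (x, y) \<noteq> 0"
    and "px (py u) (x, y) = py (px u) (x, y)"
  shows "alphafun u (x, y) * Nop u \<theta> (x, y) = Nperp u (alphafun u) (x, y) - 2 * (alphafun u (x, y))\<^sup>2"
proof -
  obtain a b A P B R :: real
  where "R > 0" "R\<^sup>2 = a\<^sup>2 + b\<^sup>2"
    and frame: "costh u (x, y) = a / R" "sinth u (x, y) = b / R" "alphafun u (x, y) = - 1 / R"
      "px \<theta> (x, y) = (a * (P + 1) - b * A) / R\<^sup>2" "py \<theta> (x, y) = (a * B - b * (P - 1)) / R\<^sup>2"
      "px (alphafun u) (x, y) = (a * A + b * (P + 1)) / R ^ 3"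
      "py (alphafun u) (x, y) = (a * (P - 1) + b * B) / R ^ 3"
    by (rule frame_in_coordinates[OF assms])
  have "Nperp u (alphafun u) (x, y) - alphafun u (x, y) * Nop u \<theta> (x, y) = 2 * (a\<^sup>2 + b\<^sup>2) / R ^ 4"
    unfolding Nop_def Nperp_def frame using \<open>R > 0\<close>
    by (simp add: field_simps power2_eq_square power3_eq_cube power4_eq_xxxx)
  also have "\<dots> = 2 * (alphafun u (x, y))\<^sup>2"
    unfolding frame \<open>R\<^sup>2 = a\<^sup>2 + b\<^sup>2\<close>[symmetric] using \<open>R > 0\<close>
    by (simp add: field_simps power2_eq_square power4_eq_xxxx)
  finally show ?thesis
    by simp
qed

lemma minimizer_equation_at:
  fixes u \<theta> :: "real \<times> real \<Rightarrow> real"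
  assumes "px u differentiable (at (x, y))" "py u differentiable (at (x, y))"
    and "\<theta> differentiable (at (x, y))"
    and "open U" "(x, y) \<in> U"
    and "\<forall>q\<in>U. cos (\<theta> q) = costh u q \<and> sin (\<theta> q) = sinth u q"
    and "Dfun u (x, y) \<noteq> 0"
    and "px (py u) (x, y) = py (px u) (x, y)"
    and minimizer: "- Nperp u (alphafun u) (x, y) + 1/2 * (alphafun u (x, y))\<^sup>2 + 1/6 * (Hfun u (x, y))\<^sup>2 = 0"
  shows "alphafun u (x, y) * (Nop u \<theta> (x, y) + (1/3) * (1 / alphafun u (x, y)) * Hfun u (x, y) * Nperp u \<theta> (x, y))
           + Nperp u (alphafun u) (x, y) = - (alphafun u (x, y))\<^sup>2"
proof -
  have "alphafun u (x, y) \<noteq> 0"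
    using \<open>Dfun u (x, y) \<noteq> 0\<close> by (simp add: alphafun_def)
  then have "alphafun u (x, y) * (Nop u \<theta> (x, y) + (1/3) * (1 / alphafun u (x, y)) * Hfun u (x, y) * Nperp u \<theta> (x, y))
               + Nperp u (alphafun u) (x, y)
             = alphafun u (x, y) * Nop u \<theta> (x, y) + Nperp u (alphafun u) (x, y) - 1/3 * (Hfun u (x, y))\<^sup>2"
    unfolding Nperp_theta_eq[OF assms(1-8)] by (simp add: field_simps power2_eq_square)
  also have "\<dots> = - (alphafun u (x, y))\<^sup>2"
    using alpha_Nop_theta_eq[OF assms(1-8)] minimizer by linarith
  finally show ?thesis .
qed

theorem proposition3p1:
  fixes u :: "real \<times> real \<Rightarrow> real" and \<Omega> :: "(real \<times> real) set"
  assumes "open \<Omega>" and "connected \<Omega>"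
    and "smooth_on_plane u \<Omega>"
    and "\<forall>p\<in>\<Omega>. Dfun u p \<noteq> 0"
    and "abs_E1_minimizer u \<Omega>"
  shows "\<forall>U (\<theta> :: real \<times> real \<Rightarrow> real).
           open U \<and> U \<subseteq> \<Omega> \<and> \<theta> differentiable_on U \<and>
           (\<forall>p\<in>U. cos (\<theta> p) = costh u p \<and> sin (\<theta> p) = sinth u p) \<longrightarrow>
           (\<forall>p\<in>U. alphafun u p * (Nop u \<theta> p + (1/3) * (1 / alphafun u p) * Hfun u p * Nperp u \<theta> p)
                    + Nperp u (alphafun u) p = - (alphafun u p)\<^sup>2)"
proof (intro allI impI ballI)
  fix U and \<theta> :: "real \<times> real \<Rightarrow> real" and p
  assume "open U \<and> U \<subseteq> \<Omega> \<and> \<theta> differentiable_on U \<and> (\<forall>p\<in>U. cos (\<theta> p) = costh u p \<and> sin (\<theta> p) = sinth u p)"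
  then have U: "open U" "U \<subseteq> \<Omega>" "\<theta> differentiable_on U"
    and angle: "\<forall>p\<in>U. cos (\<theta> p) = costh u p \<and> sin (\<theta> p) = sinth u p"
    by auto
  assume "p \<in> U"
  then obtain x y where p: "p = (x, y)" and "(x, y) \<in> U" "(x, y) \<in> \<Omega>"
    using U by (cases p) auto
  have C2: "u differentiable_on \<Omega>" "px u differentiable_on \<Omega>" "py u differentiable_on \<Omega>"
    "continuous_on \<Omega> (px (py u))" "continuous_on \<Omega> (py (px u))"
    using assms(3) unfolding smooth_on_plane_def by (metis Ck.simps numeral_2_eq_2)+
  have "px (py u) (x, y) = py (px u) (x, y)"
    using mixed_partials_eq[OF assms(1) \<open>(x, y) \<in> \<Omega>\<close> C2(1-3)] C2(4,5) assms(1) \<open>(x, y) \<in> \<Omega>\<close>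
    by (simp add: continuous_on_eq_continuous_at)
  moreover have "px u differentiable (at (x, y))" "py u differentiable (at (x, y))" "\<theta> differentiable (at (x, y))"
    using C2(2,3) U assms(1) \<open>(x, y) \<in> U\<close> \<open>(x, y) \<in> \<Omega>\<close>
    by (simp_all add: differentiable_on_eq_differentiable_at)
  ultimately show "alphafun u p * (Nop u \<theta> p + (1/3) * (1 / alphafun u p) * Hfun u p * Nperp u \<theta> p)
                    + Nperp u (alphafun u) p = - (alphafun u p)\<^sup>2"
    unfolding p using minimizer_equation_at U(1) \<open>(x, y) \<in> U\<close> angle assms(4,5) \<open>(x, y) \<in> \<Omega>\<close>
    by (simp add: abs_E1_minimizer_def)
qed

end
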